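(* Let $P\in\mathbb{R}^{m\times m}$ be symmetric, stochastic and positive semidefinite, let $\mathcal{X}\subseteq\mathbb{R}^n$ be a closed convex set, let $p\ge1$ and $\sigma=\min\{1,n^{\frac2p-1}\}$. Then for all $\bm{u}=[u_1^\top,\dots,u_m^\top]^\top$ and $\bm{v}=[v_1^\top,\dots,v_m^\top]^\top$ in $\mathcal{X}^m$, $$\big\|((I_m-P)\otimes I_n)\bm{u}\big\|_2^2\le\frac1\sigma\sum_{i,j=1}^mP_{ij}\|v_i-u_j\|_p^2.$$
   Context: $\otimes$ denotes the Kronecker product, $I_k$ the $k\times k$ identity, $\|\cdot\|_p$ the $\ell_p$-norm. Stochastic means nonnegative entries with row sums 1. *)

theory Defs
  imports "HOL-Analysis.Analysis"
begin

definition stochastic :: "real^'m^'m \<Rightarrow> bool" where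
  "stochastic P \<longleftrightarrow> (\<forall>i j. P$i$j \<ge> 0) \<and> (\<forall>i. (\<Sum>j\<in>UNIV. P$i$j) = 1)"

definition psd :: "real^'m^'m \<Rightarrow> bool" where
  "psd P \<longleftrightarrow> (\<forall>x. x \<bullet> (P *v x) \<ge> 0)"

definition kron :: "real^'b^('a::finite) \<Rightarrow> real^'d^('c::finite) \<Rightarrow> real^('b \<times> 'd)^('a \<times> 'c)" where
  "kron A B = (\<chi> r. \<chi> c. A$(fst r)$(fst c) * B$(snd r)$(snd c))"

definition stack :: "('m::finite \<Rightarrow> real^'n) \<Rightarrow> real^('m \<times> 'n)" where
  "stack u = (\<chi> r. u (fst r) $ (snd r))"

definition lpnorm :: "real \<Rightarrow> real^'n \<Rightarrow> real" where
  "lpnorm p x = (\<Sum>k\<in>UNIV. \<bar>x$k\<bar> powr p) powr (1/p)"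

end

theory Submission
  imports Defs
begin

(* Write a_k, b_k \<in> R^m for the vectors of k-th coordinates of the u_j and v_i.  Coordinatewise
   the left-hand side is \<Sum>_k |(I - P) a_k|\<^sup>2.  For symmetric stochastic P,
   \<Sum>_ij P_ij (b_i - a_j)\<^sup>2 = |b - P a|\<^sup>2 + |a|\<^sup>2 - |P a|\<^sup>2 \<ge> |a|\<^sup>2 - |P a|\<^sup>2,
   and since P - P\<^sup>2 is positive semidefinite, |P a|\<^sup>2 \<le> a \<bullet> P a, which turns
   |(I - P) a|\<^sup>2 = |a|\<^sup>2 - 2 a \<bullet> P a + |P a|\<^sup>2 into at most |a|\<^sup>2 - |P a|\<^sup>2.  Summing over k gives
   the bound with squared Euclidean distances |v_i - u_j|\<^sup>2.  These are compared with l_p norms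
   by |x|_2 \<le> |x|_p for p \<le> 2 and by the power mean inequality |x|_2\<^sup>2 \<le> n^(1-2/p) |x|_p\<^sup>2
   for p \<ge> 2. *)

lemma power2_norm_vec: "(norm (x :: real^'n))\<^sup>2 = (\<Sum>k\<in>UNIV. (x$k)\<^sup>2)"
  by (simp only: power2_norm_eq_inner) (simp add: inner_vec_def power2_eq_square)

lemma stochastic_nonneg: "stochastic P \<Longrightarrow> 0 \<le> P$i$j"
  by (simp add: stochastic_def)

lemma stochastic_row_sum: "stochastic P \<Longrightarrow> (\<Sum>j\<in>UNIV. P$i$j) = 1"
  by (simp add: stochastic_def)

lemma symmetric_stochastic_column_sum:
  assumes "transpose P = P" "stochastic P"
  shows "(\<Sum>i\<in>UNIV. P$i$j) = 1"
proof -
  have "P$i$j = P$j$i" for i j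
    by (metis assms(1) transpose_def vec_lambda_beta)
  then show ?thesis
    using stochastic_row_sum[OF assms(2), of j] by simp
qed

lemma symmetric_matrix_inner:
  fixes P :: "real^'m^'m"
  assumes "transpose P = P"
  shows "x \<bullet> (P *v y) = (P *v x) \<bullet> y"
  by (metis assms dot_lmul_matrix transpose_matrix_vector)

lemma symmetric_stochastic_quadratic_form_le:
  fixes P :: "real^'m^'m"
  assumes "transpose P = P" "stochastic P"
  shows "z \<bullet> (P *v z) \<le> z \<bullet> z"
proof -
  note rows = stochastic_row_sum[OF assms(2)]
  note cols = symmetric_stochastic_column_sum[OF assms]
  have "0 \<le> (\<Sum>i\<in>UNIV. \<Sum>j\<in>UNIV. P$i$j * (z$i - z$j)^2)"
    by (intro sum_nonneg mult_nonneg_nonneg stochastic_nonneg[OF assms(2)]) auto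
  also have "\<dots> = (\<Sum>i\<in>UNIV. \<Sum>j\<in>UNIV. P$i$j * z$i^2) + (\<Sum>i\<in>UNIV. \<Sum>j\<in>UNIV. P$i$j * z$j^2)
      - 2 * (\<Sum>i\<in>UNIV. \<Sum>j\<in>UNIV. P$i$j * z$i * z$j)"
    by (simp add: power2_diff algebra_simps sum.distrib sum_subtractf sum_distrib_left)
  also have "(\<Sum>i\<in>UNIV. \<Sum>j\<in>UNIV. P$i$j * z$i^2) = z \<bullet> z"
    by (simp add: inner_vec_def sum_distrib_right[symmetric] rows power2_eq_square)
  also have "(\<Sum>i\<in>UNIV. \<Sum>j\<in>UNIV. P$i$j * z$j^2) = z \<bullet> z"
    by (subst sum.swap) (simp add: inner_vec_def sum_distrib_right[symmetric] cols power2_eq_square)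
  also have "(\<Sum>i\<in>UNIV. \<Sum>j\<in>UNIV. P$i$j * z$i * z$j) = z \<bullet> (P *v z)"
    by (simp add: inner_vec_def matrix_vector_mult_def sum_distrib_left algebra_simps)
  finally show ?thesis by simp
qed

lemma symmetric_stochastic_psd_norm_le:
  fixes P :: "real^'m^'m"
  assumes "transpose P = P" "stochastic P" "psd P"
  shows "(norm (P *v x))\<^sup>2 \<le> x \<bullet> (P *v x)"
proof -
  \<comment> \<open>P - P P = (I - P) P (I - P) + P (I - P) P\<close>
  define z where "z = P *v x"
  define w where "w = P *v z"
  have "P *v (x - z) = z - w"
    by (simp add: z_def w_def matrix_vector_mult_diff_distrib)
  then have "(x - z) \<bullet> (P *v (x - z)) = x \<bullet> z - x \<bullet> w - z \<bullet> z + z \<bullet> w"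
    by (simp add: inner_diff_left inner_diff_right inner_commute)
  moreover have "x \<bullet> w = z \<bullet> z"
    unfolding w_def z_def by (rule symmetric_matrix_inner[OF assms(1)])
  moreover have "0 \<le> (x - z) \<bullet> (P *v (x - z))"
    using assms(3) psd_def by blast
  moreover have "z \<bullet> w \<le> z \<bullet> z"
    unfolding w_def by (rule symmetric_stochastic_quadratic_form_le[OF assms(1,2)])
  ultimately have "z \<bullet> z \<le> x \<bullet> z"
    by linarith
  then show ?thesis
    by (simp add: z_def power2_norm_eq_inner)
qed

lemma symmetric_stochastic_weighted_sq_dist_eq:
  fixes P :: "real^'m^'m"
  assumes "transpose P = P" "stochastic P"
  shows "(\<Sum>i\<in>UNIV. \<Sum>j\<in>UNIV. P$i$j * (b$i - a$j)^2)
       = (norm (b - P *v a))\<^sup>2 + (norm a)\<^sup>2 - (norm (P *v a))\<^sup>2"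
proof -
  note rows = stochastic_row_sum[OF assms(2)]
  note cols = symmetric_stochastic_column_sum[OF assms]
  have row: "(\<Sum>j\<in>UNIV. P$i$j * (b$i - a$j)^2)
      = (b$i - (P *v a)$i)^2 + (\<Sum>j\<in>UNIV. P$i$j * a$j^2) - ((P *v a)$i)^2" for i
  proof -
    have "(\<Sum>j\<in>UNIV. P$i$j * (b$i - a$j)^2)
        = (\<Sum>j\<in>UNIV. P$i$j) * b$i^2 - 2 * b$i * (\<Sum>j\<in>UNIV. P$i$j * a$j) + (\<Sum>j\<in>UNIV. P$i$j * a$j^2)"
      by (simp add: power2_diff algebra_simps sum.distrib sum_subtractf sum_distrib_left sum_distrib_right)
    then show ?thesis
      by (simp add: rows matrix_vector_mult_def power2_diff)
  qed
  have "(\<Sum>i\<in>UNIV. \<Sum>j\<in>UNIV. P$i$j * a$j^2) = (norm a)\<^sup>2"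
    by (subst sum.swap) (simp add: power2_norm_vec sum_distrib_right[symmetric] cols)
  then show ?thesis
    by (simp add: row sum.distrib sum_subtractf power2_norm_vec)
qed

lemma symmetric_stochastic_psd_residual_le:
  fixes P :: "real^'m^'m"
  assumes "transpose P = P" "stochastic P" "psd P"
  shows "(norm (a - P *v a))\<^sup>2 \<le> (\<Sum>i\<in>UNIV. \<Sum>j\<in>UNIV. P$i$j * (b$i - a$j)^2)"
proof -
  have "(norm (a - P *v a))\<^sup>2 = (norm a)\<^sup>2 - 2 * (a \<bullet> (P *v a)) + (norm (P *v a))\<^sup>2"
    by (simp add: power2_norm_eq_inner inner_diff_left inner_diff_right inner_commute)
  also have "\<dots> \<le> (norm a)\<^sup>2 - (norm (P *v a))\<^sup>2"
    using symmetric_stochastic_psd_norm_le[OF assms, of a] by simp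
  also have "\<dots> \<le> (\<Sum>i\<in>UNIV. \<Sum>j\<in>UNIV. P$i$j * (b$i - a$j)^2)"
    by (simp add: symmetric_stochastic_weighted_sq_dist_eq[OF assms(1,2)])
  finally show ?thesis .
qed

lemma lpnorm_two: "lpnorm 2 x = norm x"
proof -
  have "\<bar>x$k\<bar> powr 2 = (x$k)\<^sup>2" for k
    by (cases "x$k = 0") (simp_all add: powr_realpow)
  then show ?thesis
    by (simp add: lpnorm_def power2_norm_vec[symmetric] powr_half_sqrt)
qed

lemma lpnorm_nonneg: "0 \<le> lpnorm p x"
  by (simp add: lpnorm_def)

lemma lpnorm_powr:
  assumes "p > 0"
  shows "lpnorm p x powr p = (\<Sum>k\<in>UNIV. \<bar>x$k\<bar> powr p)"
  using assms by (simp add: lpnorm_def powr_powr sum_nonneg)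

lemma lpnorm_scaleR:
  assumes "p > 0"
  shows "lpnorm p (c *\<^sub>R x) = \<bar>c\<bar> * lpnorm p x"
proof -
  have "(\<Sum>k\<in>UNIV. \<bar>(c *\<^sub>R x)$k\<bar> powr p) = \<bar>c\<bar> powr p * (\<Sum>k\<in>UNIV. \<bar>x$k\<bar> powr p)"
    by (simp add: abs_mult powr_mult sum_distrib_left)
  then show ?thesis
    using assms by (simp add: lpnorm_def powr_mult powr_powr sum_nonneg)
qed

lemma lpnorm_eq_0_iff:
  assumes "p > 0"
  shows "lpnorm p x = 0 \<longleftrightarrow> x = 0"
  using assms by (simp add: lpnorm_def sum_nonneg_eq_0_iff vec_eq_iff)

lemma lpnorm_antimono:
  assumes "0 < p" "p \<le> r"
  shows "lpnorm r x \<le> lpnorm p x"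
proof (cases "x = 0")
  case True
  then show ?thesis by (simp add: lpnorm_def)
next
  case False
  define L where "L = lpnorm p x"
  have "L > 0"
    using False lpnorm_eq_0_iff[OF assms(1)] lpnorm_nonneg unfolding L_def
    by (metis less_eq_real_def)
  define y where "y = (1 / L) *\<^sub>R x"
  have "lpnorm p y = 1"
    using \<open>L > 0\<close> assms(1) by (simp add: y_def L_def lpnorm_scaleR)
  then have sum_p: "(\<Sum>k\<in>UNIV. \<bar>y$k\<bar> powr p) = 1"
    using lpnorm_powr[OF assms(1), of y] by simp
  have "\<bar>y$k\<bar> powr r \<le> \<bar>y$k\<bar> powr p" for k
  proof -
    have "\<bar>y$k\<bar> powr p \<le> 1"
      using sum_p member_le_sum[of k UNIV "\<lambda>k. \<bar>y$k\<bar> powr p"] by simp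
    then have "(\<bar>y$k\<bar> powr p) powr (1/p) \<le> 1"
      using assms(1) by (simp add: powr_le1)
    then have "\<bar>y$k\<bar> \<le> 1"
      using assms(1) by (simp add: powr_powr)
    then show ?thesis
      using assms by (intro powr_mono') auto
  qed
  then have "(\<Sum>k\<in>UNIV. \<bar>y$k\<bar> powr r) \<le> 1"
    using sum_mono sum_p by (metis (no_types, lifting))
  then have "lpnorm r y \<le> 1"
    using assms by (simp add: lpnorm_def powr_le1 sum_nonneg)
  then show ?thesis
    using \<open>L > 0\<close> assms by (simp add: y_def lpnorm_scaleR L_def)
qed

lemma powr_ge_tangent:
  fixes q c w :: real
  assumes "q \<ge> 1" "c > 0" "w \<ge> 0"
  shows "c powr q + q * c powr (q - 1) * (w - c) \<le> w powr q"
proof (cases "w = 0")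
  case True
  have "c powr q = c * c powr (q - 1)"
    using assms by (simp add: powr_diff)
  then show ?thesis
    using True assms by (simp add: algebra_simps)
next
  case False
  have "q * c powr (q - 1) * (w - c) \<le> w powr q - c powr q"
    using assms False
    by (intro convex_on_imp_above_tangent[where A = "{0<..}"] powr_convex)
       (auto intro!: derivative_eq_intros simp: interior_open)
  then show ?thesis
    by simp
qed

lemma sum_powr_le_card_powr_sum_powr:
  fixes w :: "'a \<Rightarrow> real"
  assumes "finite S" "S \<noteq> {}" "q \<ge> 1" "\<And>k. k \<in> S \<Longrightarrow> w k \<ge> 0"
  shows "(\<Sum>k\<in>S. w k) powr q \<le> card S powr (q - 1) * (\<Sum>k\<in>S. w k powr q)"
proof (cases "(\<Sum>k\<in>S. w k) = 0")
  case True
  then show ?thesis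
    using assms by (simp add: sum_nonneg)
next
  case False
  define n where "n = real (card S)"
  define c where "c = (\<Sum>k\<in>S. w k) / n"
  have "n > 0"
    using assms by (simp add: n_def card_gt_0_iff)
  moreover have "c > 0"
    using False assms \<open>n > 0\<close> by (simp add: c_def sum_nonneg order_le_neq_trans)
  ultimately have "(\<Sum>k\<in>S. c powr q + q * c powr (q - 1) * (w k - c)) \<le> (\<Sum>k\<in>S. w k powr q)"
    by (intro sum_mono powr_ge_tangent assms) auto
  moreover have "(\<Sum>k\<in>S. c powr q + q * c powr (q - 1) * (w k - c)) = n * c powr q"
    using \<open>n > 0\<close>
    by (simp add: sum.distrib sum_subtractf sum_distrib_left[symmetric] c_def n_def)
  moreover have "(\<Sum>k\<in>S. w k) powr q = n powr (q - 1) * (n * c powr q)"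
    using \<open>n > 0\<close> \<open>c > 0\<close>
    by (simp add: c_def powr_divide powr_diff)
  ultimately show ?thesis
    using \<open>n > 0\<close> by (simp add: n_def)
qed

lemma power2_norm_le_card_powr_lpnorm:
  fixes x :: "real^'n"
  assumes "p \<ge> 2"
  shows "(norm x)\<^sup>2 \<le> real CARD('n) powr (1 - 2/p) * (lpnorm p x)\<^sup>2"
proof -
  define q where "q = p / 2"
  have "q \<ge> 1" using assms by (simp add: q_def)
  have "((x$k)\<^sup>2) powr q = \<bar>x$k\<bar> powr p" for k
    using powr_powr[of "\<bar>x$k\<bar>" 2 q]
    by (cases "x$k = 0") (simp_all add: powr_realpow q_def)
  then have "((norm x)\<^sup>2) powr q \<le> CARD('n) powr (q - 1) * lpnorm p x powr p"
    using sum_powr_le_card_powr_sum_powr[where S = UNIV and w = "\<lambda>k. (x$k)\<^sup>2" and q = q] \<open>q \<ge> 1\<close> assms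
    by (simp add: power2_norm_vec lpnorm_powr)
  then have "(((norm x)\<^sup>2) powr q) powr (1/q) \<le> (CARD('n) powr (q - 1) * lpnorm p x powr p) powr (1/q)"
    using \<open>q \<ge> 1\<close> by (intro powr_mono2) auto
  moreover have "(((norm x)\<^sup>2) powr q) powr (1/q) = (norm x)\<^sup>2"
    using \<open>q \<ge> 1\<close> by (simp add: powr_powr)
  moreover have "(CARD('n) powr (q - 1) * lpnorm p x powr p) powr (1/q)
      = CARD('n) powr (1 - 2/p) * (lpnorm p x)\<^sup>2"
  proof -
    have "(q - 1) * (1/q) = 1 - 2/p" "p * (1/q) = 2"
      using assms by (simp_all add: q_def field_simps)
    then show ?thesis
      by (simp add: powr_mult powr_powr lpnorm_nonneg)
  qed
  ultimately show ?thesis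
    by simp
qed

lemma power2_norm_le_lpnorm:
  fixes x :: "real^'n"
  assumes "p \<ge> 1"
  shows "(norm x)\<^sup>2 \<le> (1 / min 1 (real CARD('n) powr (2/p - 1))) * (lpnorm p x)\<^sup>2"
proof (cases "p \<le> 2")
  case True
  have "1 \<le> real CARD('n) powr (2/p - 1)"
    using True assms by (intro ge_one_powr_ge_zero) (auto simp: Suc_le_eq field_simps)
  moreover have "norm x \<le> lpnorm p x"
    using lpnorm_antimono[of p 2 x] True assms by (simp add: lpnorm_two)
  ultimately show ?thesis
    by (simp add: power_mono)
next
  case False
  have "real CARD('n) powr (2/p - 1) \<le> real CARD('n) powr 0"
    using False by (intro powr_mono) (auto simp: Suc_le_eq field_simps)
  then have "1 / min 1 (real CARD('n) powr (2/p - 1)) = real CARD('n) powr (1 - 2/p)"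
    by (simp add: powr_minus_divide[symmetric])
  then show ?thesis
    using power2_norm_le_card_powr_lpnorm[of p x] False by simp
qed

definition slice :: "('m \<Rightarrow> real^'n) \<Rightarrow> 'n \<Rightarrow> real^'m" where
  "slice u k = (\<chi> j. u j $ k)"

lemma kron_mat1_mult_stack_nth:
  fixes A :: "real^'m^'m" and u :: "'m \<Rightarrow> real^'n"
  shows "(kron A (mat 1 :: real^'n^'n) *v stack u) $ (i, k) = (A *v slice u k) $ i"
proof -
  have "(kron A (mat 1 :: real^'n^'n) *v stack u) $ (i, k)
      = (\<Sum>r\<in>UNIV \<times> UNIV. A$i$(fst r) * ((mat 1 :: real^'n^'n)$k$(snd r) * u (fst r) $ (snd r)))"
    by (simp add: matrix_vector_mult_def kron_def stack_def UNIV_Times_UNIV mult.assoc)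
  also have "\<dots> = (\<Sum>j\<in>UNIV. \<Sum>l\<in>UNIV. A$i$j * ((mat 1 :: real^'n^'n)$k$l * u j $ l))"
    by (simp add: sum.cartesian_product case_prod_beta)
  also have "\<dots> = (\<Sum>j\<in>UNIV. A$i$j * u j $ k)"
    by (simp add: sum_distrib_left[symmetric] mat_def if_distrib[of "\<lambda>c. c * _"] cong: if_cong)
  finally show ?thesis
    by (simp add: matrix_vector_mult_def slice_def)
qed

lemma power2_norm_kron_mat1_mult_stack:
  fixes A :: "real^'m^'m" and u :: "'m \<Rightarrow> real^'n"
  shows "(norm (kron A (mat 1 :: real^'n^'n) *v stack u))\<^sup>2 = (\<Sum>k\<in>UNIV. (norm (A *v slice u k))\<^sup>2)"
proof -
  have "(norm (kron A (mat 1 :: real^'n^'n) *v stack u))\<^sup>2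
      = (\<Sum>(i, k)\<in>UNIV \<times> UNIV. ((A *v slice u k) $ i)\<^sup>2)"
    unfolding power2_norm_vec UNIV_Times_UNIV
    by (intro sum.cong refl) (clarsimp simp: kron_mat1_mult_stack_nth)
  also have "\<dots> = (\<Sum>i\<in>UNIV. \<Sum>k\<in>UNIV. ((A *v slice u k) $ i)\<^sup>2)"
    by (rule sum.cartesian_product[symmetric])
  also have "\<dots> = (\<Sum>k\<in>UNIV. (norm (A *v slice u k))\<^sup>2)"
    by (subst sum.swap) (simp add: power2_norm_vec)
  finally show ?thesis .
qed

theorem lemma3:
  fixes P :: "real^'m^'m" and X :: "(real^'n) set" and p :: real
    and u v :: "'m \<Rightarrow> real^'n"
  assumes "transpose P = P" and "stochastic P" and "psd P"
    and "closed X" and "convex X" and "p \<ge> 1"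
    and "\<forall>i. u i \<in> X" and "\<forall>i. v i \<in> X"
  shows "(norm (kron (mat 1 - P) (mat 1 :: real^'n^'n) *v stack u))\<^sup>2
     \<le> (1 / min 1 (real CARD('n) powr (2/p - 1)))
        * (\<Sum>i\<in>UNIV. \<Sum>j\<in>UNIV. P$i$j * (lpnorm p (v i - u j))\<^sup>2)"
proof -
  define C where "C = 1 / min 1 (real CARD('n) powr (2/p - 1))"
  have "(norm (kron (mat 1 - P) (mat 1 :: real^'n^'n) *v stack u))\<^sup>2
      = (\<Sum>k\<in>UNIV. (norm (slice u k - P *v slice u k))\<^sup>2)"
    by (simp add: power2_norm_kron_mat1_mult_stack matrix_vector_mult_diff_rdistrib)
  also have "\<dots> \<le> (\<Sum>k\<in>UNIV. \<Sum>i\<in>UNIV. \<Sum>j\<in>UNIV. P$i$j * (slice v k $ i - slice u k $ j)\<^sup>2)"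
    by (intro sum_mono symmetric_stochastic_psd_residual_le assms(1-3))
  also have "\<dots> = (\<Sum>i\<in>UNIV. \<Sum>j\<in>UNIV. P$i$j * (norm (v i - u j))\<^sup>2)"
    by (simp add: slice_def power2_norm_vec sum_distrib_left sum.swap[of _ "UNIV :: 'n set"])
  also have "\<dots> \<le> (\<Sum>i\<in>UNIV. \<Sum>j\<in>UNIV. P$i$j * (C * (lpnorm p (v i - u j))\<^sup>2))"
    unfolding C_def
    by (intro sum_mono mult_left_mono power2_norm_le_lpnorm assms(6) stochastic_nonneg assms(2))
  finally show ?thesis
    by (simp add: C_def sum_distrib_left algebra_simps)
qed

end
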